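(* Let $(X,r)$ be a finite non-degenerate solution. The group $(\mathcal{S},\circ)$ acts on $X$ by $(\sigma_a,\gamma_b)\cdot x=\sigma_a\lambda_b(x)$; more precisely, the map $(\mathcal{S},\circ)\to\mathrm{Sym}(X)$, $(\sigma_a,\gamma_b)\mapsto\sigma_a\lambda_b|_X$, is a well-defined group homomorphism.
   Context: A set-theoretic solution $(X,r)$ of the Yang--Baxter equation: $X$ non-empty, $r$ satisfies the braid relation $(r\times\mathrm{id})(\mathrm{id}\times r)(r\times\mathrm{id})=(\mathrm{id}\times r)(r\times\mathrm{id})(\mathrm{id}\times r)$; write $r(x,y)=(\lambda_x(y),\rho_y(x))$; non-degenerate means $r$ bijective and all $\lambda_x,\rho_y$ bijective. Put $\sigma_y(x)=\lambda_y\rho_{\lambda_x^{-1}(y)}(x)$. Let $A$ be the monoid $\langle X\mid x+y=y+\sigma_y(x)\rangle$, identified (via a known bijection fixing $X$) with the monoid $M=\langle X\mid x\circ y=\lambda_x(y)\circ\rho_y(x)\rangle$, so that $A$ carries operations $+$ and $\circ$ and maps $a\mapsto\lambda_a$ (monoid morphism $(A,\circ)\to\mathrm{Aut}(A,+)$), $a\mapsto\rho_a$ (anti-morphism of $(A,\circ)$), $a\mapsto\sigma_a$ (anti-morphism $(A,+)\to\mathrm{Aut}(A,+)$) extending those on $X$, with $a\circ b=a+\lambda_a(b)$, $a+b=b+\sigma_b(a)$, $\sigma_{\lambda_a(b)}\lambda_a=\lambda_a\sigma_b$; these maps leave $X$ invariant. For $a\in A$ let $\gamma_a=(\sigma_a^{-1},\lambda_a)$;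 $\mathcal{G}=\{\gamma_a:a\in A\}$ is a skew left brace with $\gamma_a+\gamma_b=\gamma_{a+b}$, $\gamma_a\circ\gamma_b=\gamma_{a\circ b}$ (well defined). Let $\mathcal{C}=\{\sigma_a:a\in A\}$, a group under composition ($\sigma_a\sigma_b=\sigma_{b+a}$), regarded as a trivial skew left brace (addition = composition). $\mathcal{S}=\mathcal{C}\rtimes\mathcal{G}$ is the set of pairs $(\sigma_a,\gamma_b)$ with componentwise addition and $(\sigma_a,\gamma_b)\circ(\sigma_c,\gamma_d)=(\sigma_a\sigma_{\lambda_b(c)},\gamma_{b\circ d})=(\sigma_{\lambda_b(c)+a},\gamma_{b\circ d})$. *)

theory Defs
  imports "HOL-Algebra.Bij"
begin

definition lam :: "('a \<times> 'a \<Rightarrow> 'a \<times> 'a) \<Rightarrow> 'a \<Rightarrow> 'a \<Rightarrow> 'a" where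
  "lam r x y = fst (r (x, y))"

definition rho :: "('a \<times> 'a \<Rightarrow> 'a \<times> 'a) \<Rightarrow> 'a \<Rightarrow> 'a \<Rightarrow> 'a" where
  "rho r y x = snd (r (x, y))"

definition r12 :: "('a \<times> 'a \<Rightarrow> 'a \<times> 'a) \<Rightarrow> 'a \<times> 'a \<times> 'a \<Rightarrow> 'a \<times> 'a \<times> 'a" where
  "r12 r t = (case t of (x, y, z) \<Rightarrow> (case r (x, y) of (u, v) \<Rightarrow> (u, v, z)))"

definition r23 :: "('a \<times> 'a \<Rightarrow> 'a \<times> 'a) \<Rightarrow> 'a \<times> 'a \<times> 'a \<Rightarrow> 'a \<times> 'a \<times> 'a" where
  "r23 r t = (case t of (x, y, z) \<Rightarrow> (case r (y, z) of (v, w) \<Rightarrow> (x, v, w)))"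

definition nondegenerate_solution :: "'a set \<Rightarrow> ('a \<times> 'a \<Rightarrow> 'a \<times> 'a) \<Rightarrow> bool" where
  "nondegenerate_solution X r \<longleftrightarrow>
     X \<noteq> {} \<and>
     (\<forall>p \<in> X \<times> X. r p \<in> X \<times> X) \<and>
     (\<forall>t \<in> X \<times> X \<times> X. r12 r (r23 r (r12 r t)) = r23 r (r12 r (r23 r t))) \<and>
     bij_betw r (X \<times> X) (X \<times> X) \<and>
     (\<forall>x \<in> X. bij_betw (lam r x) X X) \<and>
     (\<forall>y \<in> X. bij_betw (rho r y) X X)"

definition sigma :: "'a set \<Rightarrow> ('a \<times> 'a \<Rightarrow> 'a \<times> 'a) \<Rightarrow> 'a \<Rightarrow> 'a \<Rightarrow> 'a" where
  "sigma X r y x = lam r y (rho r (inv_into X (lam r x) y) x)"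

text \<open>Elements of the structure monoid A = <X | x + y = y + sigma_y(x)> are represented by
  words (lists over X); addition is concatenation.  The automorphisms sigma_a, lambda_a of (A,+)
  leave X invariant and act letterwise, so they are determined by (and represented by)
  their restrictions to X.\<close>

text \<open>sigma_{x1+...+xn} = sigma_{xn} ... sigma_{x1} (anti-morphism (A,+) -> Aut(A,+)).\<close>

definition sigW :: "'a set \<Rightarrow> ('a \<times> 'a \<Rightarrow> 'a \<times> 'a) \<Rightarrow> 'a list \<Rightarrow> 'a \<Rightarrow> 'a" where
  "sigW X r w = foldl (\<lambda>f x. sigma X r x \<circ> f) id w"

text \<open>lambda on words: x + w = x o lambda_x^{-1}(w), and lambda is a morphism from (A,o),
  so lambda_{x+w} = lambda_x lambda_{lambda_x^{-1}(w)}.\<close>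

fun lamW :: "'a set \<Rightarrow> ('a \<times> 'a \<Rightarrow> 'a \<times> 'a) \<Rightarrow> 'a list \<Rightarrow> 'a \<Rightarrow> 'a" where
  "lamW X r [] = id"
| "lamW X r (x # w) = lam r x \<circ> lamW X r (map (inv_into X (lam r x)) w)"

definition sigA :: "'a set \<Rightarrow> ('a \<times> 'a \<Rightarrow> 'a \<times> 'a) \<Rightarrow> 'a list \<Rightarrow> 'a \<Rightarrow> 'a" where
  "sigA X r a = restrict (sigW X r a) X"

definition lamA :: "'a set \<Rightarrow> ('a \<times> 'a \<Rightarrow> 'a \<times> 'a) \<Rightarrow> 'a list \<Rightarrow> 'a \<Rightarrow> 'a" where
  "lamA X r a = restrict (lamW X r a) X"

definition gamA :: "'a set \<Rightarrow> ('a \<times> 'a \<Rightarrow> 'a \<times> 'a) \<Rightarrow> 'a list \<Rightarrow> ('a \<Rightarrow> 'a) \<times> ('a \<Rightarrow> 'a)" where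
  "gamA X r a = (restrict (inv_into X (sigW X r a)) X, lamA X r a)"

definition circA :: "'a set \<Rightarrow> ('a \<times> 'a \<Rightarrow> 'a \<times> 'a) \<Rightarrow> 'a list \<Rightarrow> 'a list \<Rightarrow> 'a list" where
  "circA X r a b = a @ map (lamW X r a) b"

definition actS :: "'a set \<Rightarrow> ('a \<times> 'a \<Rightarrow> 'a \<times> 'a) \<Rightarrow> 'a list \<Rightarrow> 'a list \<Rightarrow> 'a \<Rightarrow> 'a" where
  "actS X r a b = restrict (sigW X r a \<circ> lamW X r b) X"

end

theory Submission
  imports Defs
begin

text \<open>On words, \<open>\<sigma>\<close> and \<open>\<lambda>\<close> are compositions of the letterwise maps, so
  \<open>\<sigma>\<^bsub>\<lambda>\<^sub>b(c)+a\<^esub> \<lambda>\<^bsub>b\<circ>d\<^esub> = \<sigma>\<^sub>a \<sigma>\<^bsub>\<lambda>\<^sub>b(c)\<^esub> \<lambda>\<^sub>b \<lambda>\<^sub>d\<close>.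
  The braid relation gives \<open>\<lambda>\<^sub>x \<sigma>\<^sub>y = \<sigma>\<^bsub>\<lambda>\<^sub>x(y)\<^esub> \<lambda>\<^sub>x\<close> on letters, hence
  \<open>\<sigma>\<^bsub>\<lambda>\<^sub>b(c)\<^esub> \<lambda>\<^sub>b = \<lambda>\<^sub>b \<sigma>\<^sub>c\<close> on words, and the right-hand side becomes
  \<open>(\<sigma>\<^sub>a \<lambda>\<^sub>b)(\<sigma>\<^sub>c \<lambda>\<^sub>d)\<close>. Finiteness of \<open>X\<close> is only needed to see that the
  injective maps \<open>\<sigma>\<^sub>y\<close> are permutations.\<close>

lemma r_conv_lam_rho: "r p = (lam r (fst p) (snd p), rho r (snd p) (fst p))"
  by (simp add: lam_def rho_def)

context
  fixes X :: "'a set" and r :: "'a \<times> 'a \<Rightarrow> 'a \<times> 'a"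
  assumes sol: "nondegenerate_solution X r"
begin

lemma lam_closed: "x \<in> X \<Longrightarrow> y \<in> X \<Longrightarrow> lam r x y \<in> X"
  and rho_closed: "x \<in> X \<Longrightarrow> y \<in> X \<Longrightarrow> rho r y x \<in> X"
  using sol by (auto simp: nondegenerate_solution_def lam_def rho_def mem_Times_iff)

lemma braid_components:
  assumes "x \<in> X" "y \<in> X" "z \<in> X"
  shows "lam r x (lam r y z) = lam r (lam r x y) (lam r (rho r y x) z)"
    and "rho r (lam r (rho r y x) z) (lam r x y) = lam r (rho r (lam r y z) x) (rho r z y)"
proof -
  have "r12 r (r23 r (r12 r (x, y, z))) = r23 r (r12 r (r23 r (x, y, z)))"
    using sol assms unfolding nondegenerate_solution_def by auto
  then show "lam r x (lam r y z) = lam r (lam r x y) (lam r (rho r y x) z)"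
    and "rho r (lam r (rho r y x) z) (lam r x y) = lam r (rho r (lam r y z) x) (rho r z y)"
    by (simp_all add: r12_def r23_def r_conv_lam_rho[of r])
qed

lemma bij_betw_lam: "x \<in> X \<Longrightarrow> bij_betw (lam r x) X X"
  using sol unfolding nondegenerate_solution_def by auto

lemma inv_into_lam_closed: "x \<in> X \<Longrightarrow> y \<in> X \<Longrightarrow> inv_into X (lam r x) y \<in> X"
  and lam_inv_into: "x \<in> X \<Longrightarrow> y \<in> X \<Longrightarrow> lam r x (inv_into X (lam r x) y) = y"
  and inv_into_lam: "x \<in> X \<Longrightarrow> y \<in> X \<Longrightarrow> inv_into X (lam r x) (lam r x y) = y"
  using bij_betw_lam by (auto simp: bij_betw_def intro: inv_into_into f_inv_into_f)

lemma sigma_closed: "y \<in> X \<Longrightarrow> z \<in> X \<Longrightarrow> sigma X r y z \<in> X"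
  by (simp add: sigma_def lam_closed rho_closed inv_into_lam_closed)

text \<open>\<open>\<sigma>\<^sub>y(z)\<close> is \<open>\<lambda>\<^sub>y\<close> applied to the second component of the unique
  \<open>r(z, w)\<close> whose first component is \<open>y\<close>; injectivity of \<open>r\<close> and \<open>\<lambda>\<^sub>y\<close> does the rest.\<close>

lemma inj_on_sigma:
  assumes y: "y \<in> X"
  shows "inj_on (sigma X r y) X"
proof
  fix z1 z2 assume z: "z1 \<in> X" "z2 \<in> X" and eq: "sigma X r y z1 = sigma X r y z2"
  define w1 where "w1 = inv_into X (lam r z1) y"
  define w2 where "w2 = inv_into X (lam r z2) y"
  have w: "w1 \<in> X" "w2 \<in> X" "lam r z1 w1 = y" "lam r z2 w2 = y"
    using z y by (simp_all add: w1_def w2_def inv_into_lam_closed lam_inv_into)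
  have "lam r y (rho r w1 z1) = lam r y (rho r w2 z2)"
    using eq unfolding sigma_def w1_def w2_def .
  then have "rho r w1 z1 = rho r w2 z2"
    using bij_betw_lam[OF y] rho_closed w z unfolding bij_betw_def inj_on_def by blast
  then have "r (z1, w1) = r (z2, w2)"
    using w by (simp add: r_conv_lam_rho[of r])
  moreover have "inj_on r (X \<times> X)"
    using sol unfolding nondegenerate_solution_def bij_betw_def by auto
  ultimately show "z1 = z2"
    using z w unfolding inj_on_def by blast
qed

lemma bij_betw_sigma:
  assumes "finite X" "y \<in> X"
  shows "bij_betw (sigma X r y) X X"
proof -
  have "sigma X r y ` X \<subseteq> X"
    using sigma_closed assms(2) by auto
  then show ?thesis
    using endo_inj_surj[OF assms(1) _ inj_on_sigma] inj_on_sigma assms(2) by (simp add: bij_betw_def)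
qed

lemma lam_sigma:
  assumes x: "x \<in> X" and y: "y \<in> X" and z: "z \<in> X"
  shows "lam r x (sigma X r y z) = sigma X r (lam r x y) (lam r x z)"
proof -
  define w where "w = inv_into X (lam r z) y"
  have w: "w \<in> X" "lam r z w = y"
    using y z by (simp_all add: w_def inv_into_lam_closed lam_inv_into)
  have w'X: "lam r (rho r z x) w \<in> X"
    using lam_closed rho_closed x z w(1) by blast
  have "lam r (lam r x z) (lam r (rho r z x) w) = lam r x y"
    using braid_components(1)[OF x z w(1)] w(2) by simp
  then have w': "inv_into X (lam r (lam r x z)) (lam r x y) = lam r (rho r z x) w"
    using inv_into_lam[OF lam_closed[OF x z] w'X] by simp
  have "lam r x (sigma X r y z) = lam r x (lam r y (rho r w z))"
    unfolding sigma_def w_def ..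
  also have "\<dots> = lam r (lam r x y) (lam r (rho r y x) (rho r w z))"
    using braid_components(1)[OF x y rho_closed[OF z w(1)]] .
  also have "lam r (rho r y x) (rho r w z) = rho r (lam r (rho r z x) w) (lam r x z)"
    using braid_components(2)[OF x z w(1)] w(2) by simp
  finally show ?thesis
    unfolding sigma_def w' .
qed

lemma map_inv_into_lam_lists: "x \<in> X \<Longrightarrow> w \<in> lists X \<Longrightarrow> map (inv_into X (lam r x)) w \<in> lists X"
  using inv_into_lam_closed by auto

lemma lists_lamW_induct [consumes 1, case_names Nil Cons]:
  assumes "b \<in> lists X" "P []"
    and "\<And>x w. x \<in> X \<Longrightarrow> w \<in> lists X \<Longrightarrow> P (map (inv_into X (lam r x)) w) \<Longrightarrow> P (x # w)"
  shows "P b"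
  using assms(1)
proof (induction b rule: length_induct)
  case (1 b)
  then show ?case
    using assms(2,3) map_inv_into_lam_lists by (cases b) auto
qed

lemma lamW_closed: "b \<in> lists X \<Longrightarrow> z \<in> X \<Longrightarrow> lamW X r b z \<in> X"
  by (induction b arbitrary: z rule: lists_lamW_induct) (auto simp: lam_closed)

lemma bij_betw_lamW: "b \<in> lists X \<Longrightarrow> bij_betw (lamW X r b) X X"
proof (induction b rule: lists_lamW_induct)
  case Nil
  then show ?case by (simp add: bij_betw_def)
next
  case (Cons x w)
  then have "bij_betw (lam r x \<circ> lamW X r (map (inv_into X (lam r x)) w)) X X"
    using bij_betw_lam bij_betw_trans by blast
  then show ?case by (simp add: comp_def)
qed

lemma lamW_circA:
  assumes "b \<in> lists X" "d \<in> lists X" "z \<in> X"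
  shows "lamW X r (circA X r b d) z = lamW X r b (lamW X r d z)"
  using assms unfolding circA_def
proof (induction b arbitrary: d z rule: lists_lamW_induct)
  case Nil
  then show ?case by simp
next
  case (Cons x w)
  define w' where "w' = map (inv_into X (lam r x)) w"
  have w': "w' \<in> lists X"
    using Cons map_inv_into_lam_lists by (simp add: w'_def)
  have "map (inv_into X (lam r x) \<circ> lamW X r (x # w)) d = map (lamW X r w') d"
    using Cons.hyps(1) Cons.prems(1) lamW_closed[OF w'] inv_into_lam
    by (simp add: w'_def in_lists_conv_set)
  then have "map (inv_into X (lam r x)) (w @ map (lamW X r (x # w)) d) = w' @ map (lamW X r w') d"
    by (simp only: map_append map_map w'_def [symmetric])
  then have "lamW X r (x # w @ map (lamW X r (x # w)) d) z
      = lam r x (lamW X r (w' @ map (lamW X r w') d) z)"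
    by (simp only: append_Cons lamW.simps comp_apply)
  also have "\<dots> = lamW X r (x # w) (lamW X r d z)"
    using Cons w' by (simp add: w'_def)
  finally show ?case
    by (simp only: append_Cons)
qed

lemma sigma_lamW:
  "b \<in> lists X \<Longrightarrow> y \<in> X \<Longrightarrow> z \<in> X
   \<Longrightarrow> sigma X r (lamW X r b y) (lamW X r b z) = lamW X r b (sigma X r y z)"
proof (induction b arbitrary: y z rule: lists_lamW_induct)
  case Nil
  then show ?case by simp
next
  case (Cons x w)
  define w' where "w' = map (inv_into X (lam r x)) w"
  have w': "w' \<in> lists X"
    using Cons map_inv_into_lam_lists by (simp add: w'_def)
  have "sigma X r (lam r x (lamW X r w' y)) (lam r x (lamW X r w' z))
      = lam r x (lamW X r w' (sigma X r y z))"
    using Cons lam_sigma[OF Cons.hyps(1) lamW_closed[OF w' Cons.prems(1)] lamW_closed[OF w' Cons.prems(2)]]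
    by (simp add: w'_def)
  then show ?case
    by (simp add: w'_def)
qed

end

lemma foldl_sigma_comp:
  "foldl (\<lambda>f x. sigma X r x \<circ> f) (h \<circ> g) w = foldl (\<lambda>f x. sigma X r x \<circ> f) h w \<circ> g"
  by (induction w arbitrary: h) (simp_all flip: comp_assoc)

lemma sigW_foldl: "foldl (\<lambda>f x. sigma X r x \<circ> f) g w = sigW X r w \<circ> g"
  using foldl_sigma_comp[of X r id g w] by (simp add: sigW_def)

lemma sigW_Nil [simp]: "sigW X r [] = id"
  by (simp add: sigW_def)

lemma sigW_Cons [simp]: "sigW X r (x # w) = sigW X r w \<circ> sigma X r x"
  using sigW_foldl[of X r "sigma X r x" w] by (simp add: sigW_def)

lemma sigW_append: "sigW X r (u @ v) = sigW X r v \<circ> sigW X r u"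
  unfolding sigW_def[of X r "u @ v"] foldl_append sigW_def[of X r u, symmetric]
  by (rule sigW_foldl)

context
  fixes X :: "'a set" and r :: "'a \<times> 'a \<Rightarrow> 'a \<times> 'a"
  assumes sol: "nondegenerate_solution X r"
begin

lemma sigW_closed: "c \<in> lists X \<Longrightarrow> z \<in> X \<Longrightarrow> sigW X r c z \<in> X"
  by (induction c arbitrary: z) (auto simp: sigma_closed[OF sol])

lemma bij_betw_sigW: "finite X \<Longrightarrow> c \<in> lists X \<Longrightarrow> bij_betw (sigW X r c) X X"
proof (induction c)
  case Nil
  then show ?case by (simp add: bij_betw_def)
next
  case (Cons y c)
  then have y: "y \<in> X" and c: "c \<in> lists X"
    by auto
  have "bij_betw (sigW X r c \<circ> sigma X r y) X X"
    by (rule bij_betw_trans[OF bij_betw_sigma[OF sol Cons.prems(1) y] Cons.IH[OF Cons.prems(1) c]])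
  then show ?case
    by (simp add: comp_def)
qed

lemma sigW_map_lamW:
  "b \<in> lists X \<Longrightarrow> c \<in> lists X \<Longrightarrow> z \<in> X
   \<Longrightarrow> sigW X r (map (lamW X r b) c) (lamW X r b z) = lamW X r b (sigW X r c z)"
  by (induction c arbitrary: z) (auto simp: sigma_lamW[OF sol] sigma_closed[OF sol])

lemma actS_cong:
  assumes "b \<in> lists X" "sigA X r a = sigA X r c" "gamA X r b = gamA X r d"
  shows "actS X r a b = actS X r c d"
proof
  fix x
  show "actS X r a b x = actS X r c d x"
  proof (cases "x \<in> X")
    case True
    have "lamA X r b x = lamA X r d x"
      using assms(3) by (simp add: gamA_def)
    then have "lamW X r b x = lamW X r d x"
      using True by (simp add: lamA_def)
    moreover have "sigW X r a (lamW X r b x) = sigW X r c (lamW X r b x)"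
      using assms(2) lamW_closed[OF sol assms(1) True] unfolding sigA_def by (metis restrict_apply')
    ultimately show ?thesis
      using True by (simp add: actS_def)
  qed (simp add: actS_def)
qed

lemma actS_Bij: "finite X \<Longrightarrow> a \<in> lists X \<Longrightarrow> b \<in> lists X \<Longrightarrow> actS X r a b \<in> Bij X"
  using bij_betw_trans[OF bij_betw_lamW[OF sol] bij_betw_sigW]
  by (simp add: actS_def Bij_def)

lemma actS_circA:
  assumes "b \<in> lists X" "c \<in> lists X" "d \<in> lists X"
  shows "actS X r (map (lamW X r b) c @ a) (circA X r b d) = compose X (actS X r a b) (actS X r c d)"
proof
  fix x
  show "actS X r (map (lamW X r b) c @ a) (circA X r b d) x = compose X (actS X r a b) (actS X r c d) x"
  proof (cases "x \<in> X")
    case True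
    have d: "lamW X r d x \<in> X"
      using lamW_closed[OF sol assms(3) True] .
    then show ?thesis
      using True sigW_closed[OF assms(2) d]
      by (simp add: actS_def compose_def sigW_append lamW_circA[OF sol assms(1,3) True]
          sigW_map_lamW[OF assms(1,2) d])
  qed (simp add: actS_def compose_def)
qed

end

theorem lemma2p3:
  fixes X :: "'a set" and r :: "'a \<times> 'a \<Rightarrow> 'a \<times> 'a"
  assumes "finite X" and "nondegenerate_solution X r"
  shows "(\<forall>a\<in>lists X. \<forall>b\<in>lists X. \<forall>c\<in>lists X. \<forall>d\<in>lists X.
            sigA X r a = sigA X r c \<and> gamA X r b = gamA X r d \<longrightarrow> actS X r a b = actS X r c d)
       \<and> (\<forall>a\<in>lists X. \<forall>b\<in>lists X. actS X r a b \<in> carrier (BijGroup X))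
       \<and> (\<forall>a\<in>lists X. \<forall>b\<in>lists X. \<forall>c\<in>lists X. \<forall>d\<in>lists X.
            actS X r (map (lamW X r b) c @ a) (circA X r b d)
              = actS X r a b \<otimes>\<^bsub>BijGroup X\<^esub> actS X r c d)"
proof (intro conjI ballI impI)
  fix a b c d
  assume "b \<in> lists X" "sigA X r a = sigA X r c \<and> gamA X r b = gamA X r d"
  then show "actS X r a b = actS X r c d"
    using actS_cong[OF assms(2)] by blast
next
  fix a b
  assume "a \<in> lists X" "b \<in> lists X"
  then show "actS X r a b \<in> carrier (BijGroup X)"
    using actS_Bij[OF assms(2,1)] by (simp add: BijGroup_def)
next
  fix a b c d
  assume "a \<in> lists X" "b \<in> lists X" "c \<in> lists X" "d \<in> lists X"
  then show "actS X r (map (lamW X r b) c @ a) (circA X r b d) = actS X r a b \<otimes>\<^bsub>BijGroup X\<^esub> actS X r c d"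
    using actS_circA[OF assms(2)] actS_Bij[OF assms(2,1)] by (simp add: BijGroup_def)
qed

end
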